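(* Let $(\mathcal{B}_1,\mathcal{B}_0)$ be a Rota-Baxter operator on a crossed module of Lie groups $(H,G,t,\Phi)$, and let $\mathcal{C}$ be the small category associated with $(H,G,t,\Phi)$ (see context). Define $R_0:\mathcal{C}_0\times\mathcal{C}_0\to\mathcal{C}_0\times\mathcal{C}_0$ and $R_1:\mathcal{C}_1\times\mathcal{C}_1\to\mathcal{C}_1\times\mathcal{C}_1$ by $$R_0(c,d)=\Big(\mathrm{Ad}_{\mathcal{B}_0(c)}d,\ \mathrm{Ad}_{\mathcal{B}_0(\mathrm{Ad}_{\mathcal{B}_0(c)}d)^{-1}(\mathrm{Ad}_{\mathcal{B}_0(c)}d)^{-1}}\,c\Big),$$ $$R_1(X,Y)=\Big(\mathrm{Ad}_{\mathcal{B}(X)}Y,\ \mathrm{Ad}_{\mathcal{B}(\mathrm{Ad}_{\mathcal{B}(X)}Y)^{-1}(\mathrm{Ad}_{\mathcal{B}(X)}Y)^{-1}}\,X\Big),\quad X,Y\in G\times H,$$ where in $R_0$ the operations are in $G$, in $R_1$ they are in the semi-direct product group $(G\ltimes_\Phi H,\cdot_\Phi)$, $\mathrm{Ad}_gh=ghg^{-1}$, and $\mathcal{B}(a,p)=\big(\mathcal{B}_0(a),\ \Phi(\mathcal{B}_0(a))\mathcal{B}_1(\Phi(\mathcal{B}_0(a)^{-1}a^{-1})p)\big)$. Then $R=(R_1,R_0):\mathcal{C}\times\mathcal{C}\to\mathcal{C}\times\mathcal{C}$ is an invertible functor satisfying $$(R\times\mathrm{Id}_{\mathcal{C}})(\mathrm{Id}_{\mathcal{C}}\times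 R)(R\times\mathrm{Id}_{\mathcal{C}})=(\mathrm{Id}_{\mathcal{C}}\times R)(R\times\mathrm{Id}_{\mathcal{C}})(\mathrm{Id}_{\mathcal{C}}\times R),$$ i.e. $(\mathcal{C},R)$ is a categorical solution of the Yang-Baxter equation.
   Context: A crossed module of Lie groups is a quadruple $(H,G,t,\Phi)$ where $H,G$ are Lie groups, $t:H\to G$ is a Lie group homomorphism and $\Phi:G\to\mathrm{Aut}(H)$ is a smooth action of $G$ on $H$ by automorphisms such that $\Phi(t(p))q=pqp^{-1}$ and $t(\Phi(a)p)=a\,t(p)\,a^{-1}$ for all $p,q\in H$, $a\in G$. A Rota-Baxter operator on a Lie group $G$ is a smooth map $\mathcal{B}:G\to G$ with $\mathcal{B}(a)\mathcal{B}(b)=\mathcal{B}(a\mathcal{B}(a)b\mathcal{B}(a)^{-1})$ for all $a,b\in G$. A Rota-Baxter operator on a crossed module of Lie groups $(H,G,t,\Phi)$ is a pair $(\mathcal{B}_1,\mathcal{B}_0)$ of smooth maps $\mathcal{B}_1:H\to H$, $\mathcal{B}_0:G\to G$ such that (i) $\mathcal{B}_1,\mathcal{B}_0$ are Rota-Baxter operators on $H$, $G$; (ii) $t\circ\mathcal{B}_1=\mathcal{B}_0\circ t$; (iii) $\Phi(\mathcal{B}_0(a))\mathcal{B}_1(p)=\mathcal{B}_1\big(\Phi(a\mathcal{B}_0(a))(p\mathcal{B}_1(p))\cdot\Phi(\mathcal{B}_0(a))\mathcal{B}_1(p)^{-1}\big)$ for all $a\in G,p\in H$. The small category $\mathcal{C}$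 associated with $(H,G,t,\Phi)$: objects $\mathcal{C}_0=G$, morphisms $\mathcal{C}_1=G\times H$, source $\mathfrak{s}(a,p)=a$, target $\mathfrak{t}(a,p)=t(p)a$, composition $(a,p)\circ(b,q)=(b,pq)$ whenever $t(q)b=a$, identities $1_a=(a,e_H)$. The semi-direct product $(G\ltimes_\Phi H,\cdot_\Phi)$ is $G\times H$ with $(a,p)\cdot_\Phi(b,q)=(ab,p\Phi(a)q)$. $\mathcal{C}\times\mathcal{C}$ is the product category. A categorical solution of the Yang-Baxter equation is a pair $(\mathcal{C},R)$ with $\mathcal{C}$ a small category and $R:\mathcal{C}\times\mathcal{C}\to\mathcal{C}\times\mathcal{C}$ an invertible functor satisfying the displayed braid relation. *)

theory Defs
  imports "HOL-Algebra.Algebra"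
begin

text \<open>Smoothness is not modelled; all structures are abstract groups.\<close>

definition crossed_module ::
  "('h, 'c) monoid_scheme \<Rightarrow> ('g, 'd) monoid_scheme \<Rightarrow> ('h \<Rightarrow> 'g) \<Rightarrow> ('g \<Rightarrow> 'h \<Rightarrow> 'h) \<Rightarrow> bool"
  where
  "crossed_module H G t Phi \<longleftrightarrow>
     group H \<and> group G \<and> t \<in> hom H G \<and>
     (\<forall>a\<in>carrier G. Phi a \<in> iso H H) \<and>
     (\<forall>a\<in>carrier G. \<forall>b\<in>carrier G. \<forall>p\<in>carrier H. Phi (a \<otimes>\<^bsub>G\<^esub> b) p = Phi a (Phi b p)) \<and>
     (\<forall>p\<in>carrier H. Phi \<one>\<^bsub>G\<^esub> p = p) \<and>
     (\<forall>p\<in>carrier H. \<forall>q\<in>carrier H. Phi (t p) q = p \<otimes>\<^bsub>H\<^esub> q \<otimes>\<^bsub>H\<^esub> inv\<^bsub>H\<^esub> p) \<and>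
     (\<forall>a\<in>carrier G. \<forall>p\<in>carrier H. t (Phi a p) = a \<otimes>\<^bsub>G\<^esub> t p \<otimes>\<^bsub>G\<^esub> inv\<^bsub>G\<^esub> a)"

definition rota_baxter :: "('g, 'd) monoid_scheme \<Rightarrow> ('g \<Rightarrow> 'g) \<Rightarrow> bool" where
  "rota_baxter G B \<longleftrightarrow> B \<in> carrier G \<rightarrow> carrier G \<and>
     (\<forall>a\<in>carrier G. \<forall>b\<in>carrier G.
        B a \<otimes>\<^bsub>G\<^esub> B b = B (a \<otimes>\<^bsub>G\<^esub> B a \<otimes>\<^bsub>G\<^esub> b \<otimes>\<^bsub>G\<^esub> inv\<^bsub>G\<^esub> (B a)))"

definition rota_baxter_cm ::
  "('h, 'c) monoid_scheme \<Rightarrow> ('g, 'd) monoid_scheme \<Rightarrow> ('h \<Rightarrow> 'g) \<Rightarrow> ('g \<Rightarrow> 'h \<Rightarrow> 'h)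
   \<Rightarrow> ('h \<Rightarrow> 'h) \<Rightarrow> ('g \<Rightarrow> 'g) \<Rightarrow> bool" where
  "rota_baxter_cm H G t Phi B1 B0 \<longleftrightarrow>
     rota_baxter H B1 \<and> rota_baxter G B0 \<and>
     (\<forall>p\<in>carrier H. t (B1 p) = B0 (t p)) \<and>
     (\<forall>a\<in>carrier G. \<forall>p\<in>carrier H.
        Phi (B0 a) (B1 p) =
        B1 (Phi (a \<otimes>\<^bsub>G\<^esub> B0 a) (p \<otimes>\<^bsub>H\<^esub> B1 p) \<otimes>\<^bsub>H\<^esub> inv\<^bsub>H\<^esub> (Phi (B0 a) (B1 p))))"

definition semidirect ::
  "('g, 'd) monoid_scheme \<Rightarrow> ('h, 'c) monoid_scheme \<Rightarrow> ('g \<Rightarrow> 'h \<Rightarrow> 'h) \<Rightarrow> ('g \<times> 'h) monoid" where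
  "semidirect G H Phi =
     \<lparr> carrier = carrier G \<times> carrier H,
       monoid.mult = (\<lambda>(a, p) (b, q). (a \<otimes>\<^bsub>G\<^esub> b, p \<otimes>\<^bsub>H\<^esub> Phi a q)),
       monoid.one = (\<one>\<^bsub>G\<^esub>, \<one>\<^bsub>H\<^esub>) \<rparr>"

definition Ad :: "('a, 'd) monoid_scheme \<Rightarrow> 'a \<Rightarrow> 'a \<Rightarrow> 'a" where
  "Ad M g h = g \<otimes>\<^bsub>M\<^esub> h \<otimes>\<^bsub>M\<^esub> inv\<^bsub>M\<^esub> g"

definition B_sd ::
  "('g, 'd) monoid_scheme \<Rightarrow> ('h, 'c) monoid_scheme \<Rightarrow> ('g \<Rightarrow> 'h \<Rightarrow> 'h)
   \<Rightarrow> ('h \<Rightarrow> 'h) \<Rightarrow> ('g \<Rightarrow> 'g) \<Rightarrow> 'g \<times> 'h \<Rightarrow> 'g \<times> 'h" where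
  "B_sd G H Phi B1 B0 = (\<lambda>(a, p).
     (B0 a, Phi (B0 a) (B1 (Phi (inv\<^bsub>G\<^esub> (B0 a) \<otimes>\<^bsub>G\<^esub> inv\<^bsub>G\<^esub> a) p))))"

definition R_map :: "('a, 'd) monoid_scheme \<Rightarrow> ('a \<Rightarrow> 'a) \<Rightarrow> 'a \<times> 'a \<Rightarrow> 'a \<times> 'a" where
  "R_map M B = (\<lambda>(x, y).
     (let u = Ad M (B x) y
      in (u, Ad M (inv\<^bsub>M\<^esub> (B u) \<otimes>\<^bsub>M\<^esub> inv\<^bsub>M\<^esub> u) x)))"

definition R0 :: "('g, 'd) monoid_scheme \<Rightarrow> ('g \<Rightarrow> 'g) \<Rightarrow> 'g \<times> 'g \<Rightarrow> 'g \<times> 'g" where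
  "R0 G B0 = R_map G B0"

definition R1 ::
  "('g, 'd) monoid_scheme \<Rightarrow> ('h, 'c) monoid_scheme \<Rightarrow> ('g \<Rightarrow> 'h \<Rightarrow> 'h)
   \<Rightarrow> ('h \<Rightarrow> 'h) \<Rightarrow> ('g \<Rightarrow> 'g) \<Rightarrow> ('g \<times> 'h) \<times> ('g \<times> 'h) \<Rightarrow> ('g \<times> 'h) \<times> ('g \<times> 'h)" where
  "R1 G H Phi B1 B0 = R_map (semidirect G H Phi) (B_sd G H Phi B1 B0)"

record ('o, 'm) small_cat =
  cat_ob :: "'o set"
  cat_mor :: "'m set"
  cat_src :: "'m \<Rightarrow> 'o"
  cat_tgt :: "'m \<Rightarrow> 'o"
  cat_comp :: "'m \<Rightarrow> 'm \<Rightarrow> 'm"  \<comment> \<open>cat_comp f g = f o g, defined when tgt g = src f\<close>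
  cat_id :: "'o \<Rightarrow> 'm"

definition prod_cat :: "('o, 'm) small_cat \<Rightarrow> ('p, 'n) small_cat \<Rightarrow> ('o \<times> 'p, 'm \<times> 'n) small_cat" where
  "prod_cat C D =
     \<lparr> cat_ob = cat_ob C \<times> cat_ob D,
       cat_mor = cat_mor C \<times> cat_mor D,
       cat_src = (\<lambda>(f, g). (cat_src C f, cat_src D g)),
       cat_tgt = (\<lambda>(f, g). (cat_tgt C f, cat_tgt D g)),
       cat_comp = (\<lambda>(f, g) (f', g'). (cat_comp C f f', cat_comp D g g')),
       cat_id = (\<lambda>(x, y). (cat_id C x, cat_id D y)) \<rparr>"

definition is_functor ::
  "('o, 'm) small_cat \<Rightarrow> ('p, 'n) small_cat \<Rightarrow> ('m \<Rightarrow> 'n) \<Rightarrow> ('o \<Rightarrow> 'p) \<Rightarrow> bool" where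
  "is_functor C D F1 F0 \<longleftrightarrow>
     F0 \<in> cat_ob C \<rightarrow> cat_ob D \<and> F1 \<in> cat_mor C \<rightarrow> cat_mor D \<and>
     (\<forall>f\<in>cat_mor C. cat_src D (F1 f) = F0 (cat_src C f)) \<and>
     (\<forall>f\<in>cat_mor C. cat_tgt D (F1 f) = F0 (cat_tgt C f)) \<and>
     (\<forall>f\<in>cat_mor C. \<forall>g\<in>cat_mor C. cat_tgt C g = cat_src C f \<longrightarrow>
        F1 (cat_comp C f g) = cat_comp D (F1 f) (F1 g)) \<and>
     (\<forall>x\<in>cat_ob C. F1 (cat_id C x) = cat_id D (F0 x))"

definition invertible_functor ::
  "('o, 'm) small_cat \<Rightarrow> ('p, 'n) small_cat \<Rightarrow> ('m \<Rightarrow> 'n) \<Rightarrow> ('o \<Rightarrow> 'p) \<Rightarrow> bool" where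
  "invertible_functor C D F1 F0 \<longleftrightarrow>
     is_functor C D F1 F0 \<and>
     (\<exists>S1 S0. is_functor D C S1 S0 \<and>
        (\<forall>x\<in>cat_ob C. S0 (F0 x) = x) \<and> (\<forall>y\<in>cat_ob D. F0 (S0 y) = y) \<and>
        (\<forall>f\<in>cat_mor C. S1 (F1 f) = f) \<and> (\<forall>g\<in>cat_mor D. F1 (S1 g) = g))"

definition R_x_Id :: "('a \<times> 'a \<Rightarrow> 'a \<times> 'a) \<Rightarrow> 'a \<times> 'a \<times> 'a \<Rightarrow> 'a \<times> 'a \<times> 'a" where
  "R_x_Id F = (\<lambda>(x, y, z). (fst (F (x, y)), snd (F (x, y)), z))"

definition Id_x_R :: "('a \<times> 'a \<Rightarrow> 'a \<times> 'a) \<Rightarrow> 'a \<times> 'a \<times> 'a \<Rightarrow> 'a \<times> 'a \<times> 'a" where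
  "Id_x_R F = (\<lambda>(x, y, z). (x, F (y, z)))"

definition braid_rel :: "'a set \<Rightarrow> ('a \<times> 'a \<Rightarrow> 'a \<times> 'a) \<Rightarrow> bool" where
  "braid_rel A F \<longleftrightarrow> (\<forall>x\<in>A. \<forall>y\<in>A. \<forall>z\<in>A.
     R_x_Id F (Id_x_R F (R_x_Id F (x, y, z))) = Id_x_R F (R_x_Id F (Id_x_R F (x, y, z))))"

definition categorical_YBE_solution ::
  "('o, 'm) small_cat \<Rightarrow> ('m \<times> 'm \<Rightarrow> 'm \<times> 'm) \<Rightarrow> ('o \<times> 'o \<Rightarrow> 'o \<times> 'o) \<Rightarrow> bool" where
  "categorical_YBE_solution C F1 F0 \<longleftrightarrow>
     invertible_functor (prod_cat C C) (prod_cat C C) F1 F0 \<and>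
     braid_rel (cat_ob C) F0 \<and> braid_rel (cat_mor C) F1"

definition cm_category ::
  "('h, 'c) monoid_scheme \<Rightarrow> ('g, 'd) monoid_scheme \<Rightarrow> ('h \<Rightarrow> 'g) \<Rightarrow> ('g, 'g \<times> 'h) small_cat" where
  "cm_category H G t =
     \<lparr> cat_ob = carrier G,
       cat_mor = carrier G \<times> carrier H,
       cat_src = (\<lambda>(a, p). a),
       cat_tgt = (\<lambda>(a, p). t p \<otimes>\<^bsub>G\<^esub> a),
       cat_comp = (\<lambda>(a, p) (b, q). (b, p \<otimes>\<^bsub>H\<^esub> q)),
       cat_id = (\<lambda>a. (a, \<one>\<^bsub>H\<^esub>)) \<rparr>"

end

theory Submission
  imports Defs
begin

text \<open>
  In any group M with a Rota-Baxter operator B the map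
  R (x, y) = (u, Ad (B(u)\<inverse> u\<inverse>) x) with u = Ad (B x) y is the standard
  set-theoretic solution attached to the descendent group x \<circ> y = x B(x) y B(x)\<inverse>: it preserves
  \<circ>-products, its first components compose via the homomorphism B, and \<circ> is left cancellative,
  which forces the braid relation; its inverse is written down explicitly. Moreover R is built
  from the group operations and B alone, so it commutes with every homomorphism intertwining
  two Rota-Baxter operators.

  Both R0 and R1 are instances: R0 for (G, B0), R1 for the semidirect product K = G \<ltimes> H with the
  operator B of the statement, which is Rota-Baxter thanks to condition (iii). Source, target
  and identity of the category are homomorphisms between (K, B) and (G, B0) intertwining the
  operators, and composition is such a homomorphism on the subgroup of composable pairs of
  K \<times> K. Naturality of R with respect to these four maps is exactly functoriality.
\<close>

section \<open>The Yang-Baxter map of an operator on a group\<close>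

context group
begin

lemma inv_mult_cancel [simp]: "x \<in> carrier G \<Longrightarrow> y \<in> carrier G \<Longrightarrow> inv x \<otimes> (x \<otimes> y) = y"
  by (simp add: m_assoc [symmetric])

lemma mult_inv_cancel [simp]: "x \<in> carrier G \<Longrightarrow> y \<in> carrier G \<Longrightarrow> x \<otimes> (inv x \<otimes> y) = y"
  by (simp add: m_assoc [symmetric])

lemma Ad_closed [simp]: "g \<in> carrier G \<Longrightarrow> x \<in> carrier G \<Longrightarrow> Ad G g x \<in> carrier G"
  by (simp add: Ad_def)

lemma Ad_mult: "g \<in> carrier G \<Longrightarrow> x \<in> carrier G \<Longrightarrow> y \<in> carrier G \<Longrightarrow>
    Ad G g (x \<otimes> y) = Ad G g x \<otimes> Ad G g y"
  by (simp add: Ad_def m_assoc)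

lemma Ad_inv: "g \<in> carrier G \<Longrightarrow> x \<in> carrier G \<Longrightarrow> Ad G g (inv x) = inv (Ad G g x)"
  by (simp add: Ad_def m_assoc inv_mult_group)

lemma Ad_Ad: "g \<in> carrier G \<Longrightarrow> h \<in> carrier G \<Longrightarrow> x \<in> carrier G \<Longrightarrow>
    Ad G g (Ad G h x) = Ad G (g \<otimes> h) x"
  by (simp add: Ad_def m_assoc inv_mult_group)

end

definition R_map_inv :: "('a, 'd) monoid_scheme \<Rightarrow> ('a \<Rightarrow> 'a) \<Rightarrow> 'a \<times> 'a \<Rightarrow> 'a \<times> 'a" where
  "R_map_inv M B = (\<lambda>(u, v).
     (let x = Ad M (u \<otimes>\<^bsub>M\<^esub> B u) v in (x, Ad M (inv\<^bsub>M\<^esub> (B x)) u)))"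

context group
begin

lemma R_map_eq:
  "R_map G B (x, y) =
     (Ad G (B x) y, Ad G (inv (B (Ad G (B x) y)) \<otimes> inv (Ad G (B x) y)) x)"
  by (simp add: R_map_def Let_def)

context
  fixes B assumes B_closed: "B \<in> carrier G \<rightarrow> carrier G"
begin

lemma R_map_closed:
  "x \<in> carrier G \<Longrightarrow> y \<in> carrier G \<Longrightarrow> R_map G B (x, y) \<in> carrier G \<times> carrier G"
  using B_closed by (auto simp: R_map_eq Pi_iff)

lemma R_map_inv_closed:
  "u \<in> carrier G \<Longrightarrow> v \<in> carrier G \<Longrightarrow> R_map_inv G B (u, v) \<in> carrier G \<times> carrier G"
  using B_closed by (auto simp: R_map_inv_def Let_def Pi_iff)

lemma R_map_inv_R_map:
  "x \<in> carrier G \<Longrightarrow> y \<in> carrier G \<Longrightarrow> R_map_inv G B (R_map G B (x, y)) = (x, y)"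
  using B_closed by (auto simp: R_map_inv_def R_map_eq Let_def Ad_def m_assoc inv_mult_group Pi_iff)

lemma R_map_R_map_inv:
  "u \<in> carrier G \<Longrightarrow> v \<in> carrier G \<Longrightarrow> R_map G B (R_map_inv G B (u, v)) = (u, v)"
  using B_closed by (auto simp: R_map_inv_def R_map_eq Let_def Ad_def m_assoc inv_mult_group Pi_iff)

end

end

lemma (in group_hom) hom_Ad:
  "g \<in> carrier G \<Longrightarrow> x \<in> carrier G \<Longrightarrow> h (Ad G g x) = Ad H (h g) (h x)"
  by (simp add: Ad_def)

definition rb_hom ::
  "('a, 'c) monoid_scheme \<Rightarrow> ('a \<Rightarrow> 'a) \<Rightarrow> ('b, 'd) monoid_scheme \<Rightarrow> ('b \<Rightarrow> 'b) \<Rightarrow> ('a \<Rightarrow> 'b) \<Rightarrow> bool"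
  where "rb_hom M B N C h \<longleftrightarrow> h \<in> hom M N \<and> (\<forall>x\<in>carrier M. h (B x) = C (h x))"

lemma
  assumes "group M" "group N" "B \<in> carrier M \<rightarrow> carrier M" "rb_hom M B N C h"
    and "x \<in> carrier M" "y \<in> carrier M"
  shows R_map_natural: "R_map N C (h x, h y) = map_prod h h (R_map M B (x, y))"
    and R_map_inv_natural: "R_map_inv N C (h x, h y) = map_prod h h (R_map_inv M B (x, y))"
proof -
  interpret M: group M by fact
  interpret group_hom M N h
    using assms(1-4) by (simp add: group_hom_def group_hom_axioms_def rb_hom_def)
  have hB: "\<And>x. x \<in> carrier M \<Longrightarrow> h (B x) = C (h x)"
    using assms(4) by (simp add: rb_hom_def)
  have "\<And>x. x \<in> carrier M \<Longrightarrow> B x \<in> carrier M"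
    using assms(3) by blast
  with hB show "R_map N C (h x, h y) = map_prod h h (R_map M B (x, y))"
    and "R_map_inv N C (h x, h y) = map_prod h h (R_map_inv M B (x, y))"
    using assms(5,6) by (simp_all add: R_map_def R_map_inv_def Let_def hom_Ad)
qed

section \<open>Rota-Baxter groups\<close>

locale rota_baxter_group = group M for M (structure) +
  fixes B
  assumes rota_baxter: "rota_baxter M B"
begin

lemma B_closed [simp]: "x \<in> carrier M \<Longrightarrow> B x \<in> carrier M"
  using rota_baxter by (auto simp: rota_baxter_def)

lemma B_Pi: "B \<in> carrier M \<rightarrow> carrier M"
  by simp

lemma B_mult:
  "x \<in> carrier M \<Longrightarrow> y \<in> carrier M \<Longrightarrow> B x \<otimes> B y = B (x \<otimes> B x \<otimes> y \<otimes> inv (B x))"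
  using rota_baxter by (simp add: rota_baxter_def)

lemma B_one [simp]: "B \<one> = \<one>"
  using B_mult [of \<one> \<one>] by simp

definition circ :: "'a \<Rightarrow> 'a \<Rightarrow> 'a" where
  "circ x y = x \<otimes> Ad M (B x) y"

lemma circ_closed [simp]: "x \<in> carrier M \<Longrightarrow> y \<in> carrier M \<Longrightarrow> circ x y \<in> carrier M"
  by (simp add: circ_def)

lemma B_circ: "x \<in> carrier M \<Longrightarrow> y \<in> carrier M \<Longrightarrow> B (circ x y) = B x \<otimes> B y"
  by (simp add: circ_def Ad_def B_mult m_assoc)

lemma Ad_B_circ:
  "x \<in> carrier M \<Longrightarrow> y \<in> carrier M \<Longrightarrow> z \<in> carrier M \<Longrightarrow>
    Ad M (B (circ x y)) z = Ad M (B x) (Ad M (B y) z)"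
  by (simp add: B_circ Ad_Ad)

lemma circ_assoc:
  "x \<in> carrier M \<Longrightarrow> y \<in> carrier M \<Longrightarrow> z \<in> carrier M \<Longrightarrow>
    circ (circ x y) z = circ x (circ y z)"
  using Ad_B_circ [of x y z] by (simp add: circ_def Ad_mult m_assoc)

lemma circ_left_cancel:
  "x \<in> carrier M \<Longrightarrow> y \<in> carrier M \<Longrightarrow> z \<in> carrier M \<Longrightarrow> circ x y = circ x z \<Longrightarrow> y = z"
  by (simp add: circ_def Ad_def)

lemma B_circ_inverse:
  assumes "x \<in> carrier M"
  shows "B (inv (B x) \<otimes> inv x \<otimes> B x) = inv (B x)"
proof -
  have "circ x (inv (B x) \<otimes> inv x \<otimes> B x) = \<one>"
    using assms by (simp add: circ_def Ad_def m_assoc)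
  then have "B x \<otimes> B (inv (B x) \<otimes> inv x \<otimes> B x) = \<one>"
    using assms B_circ [of x "inv (B x) \<otimes> inv x \<otimes> B x"] by simp
  then have "B (inv (B x) \<otimes> inv x \<otimes> B x) \<otimes> B x = \<one>"
    by (rule inv_comm) (simp_all add: assms)
  then show ?thesis
    by (rule inv_equality [symmetric]) (simp_all add: assms)
qed

lemma R_map_eq_PairD:
  assumes "R_map M B (x, y) = (u, v)" "x \<in> carrier M" "y \<in> carrier M"
  shows "u \<in> carrier M" "v \<in> carrier M" "u = Ad M (B x) y" "circ u v = circ x y"
  using assms by (auto simp: R_map_eq circ_def Ad_def m_assoc inv_mult_group)

text \<open>
  Both sides of the braid relation produce triples \<open>(p, q, r)\<close> with the same \<open>p\<close>, the same
  \<open>circ p q\<close> and the same \<open>circ (circ p q) r\<close>; left cancellation in \<open>circ\<close> identifies them.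
\<close>

lemma R12_R23_R12:
  assumes "x \<in> carrier M" "y \<in> carrier M" "z \<in> carrier M"
    and "R_x_Id (R_map M B) (Id_x_R (R_map M B) (R_x_Id (R_map M B) (x, y, z))) = (p, q, r)"
  shows "p = Ad M (B x) (Ad M (B y) z)" "circ p q = Ad M (B x) y \<otimes> p"
    "circ (circ p q) r = circ (circ x y) z" "p \<in> carrier M" "q \<in> carrier M" "r \<in> carrier M"
proof -
  obtain u1 v1 where R1: "R_map M B (x, y) = (u1, v1)" by fastforce
  note 1 = R_map_eq_PairD [OF R1 assms(1,2)]
  obtain u2 w where R2: "R_map M B (v1, z) = (u2, w)" by fastforce
  note 2 = R_map_eq_PairD [OF R2 1(2) assms(3)]
  from assms(4) have R3: "R_map M B (u1, u2) = (p, q)" and r: "r = w"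
    by (simp_all add: R_x_Id_def Id_x_R_def R1 R2 prod_eq_iff)
  note 3 = R_map_eq_PairD [OF R3 1(1) 2(1)]
  show "p \<in> carrier M" "q \<in> carrier M" "r \<in> carrier M"
    using 2(2) 3(1,2) by (simp_all add: r)
  have "p = Ad M (B (circ u1 v1)) z"
    using 1(1,2) 2(3) 3(3) assms(3) by (simp add: Ad_B_circ)
  then show "p = Ad M (B x) (Ad M (B y) z)"
    using assms by (simp add: 1(4) Ad_B_circ)
  have "circ p q = u1 \<otimes> p"
    unfolding 3(4) by (simp add: 3(3) circ_def)
  then show "circ p q = Ad M (B x) y \<otimes> p"
    by (simp only: 1(3))
  have "circ (circ p q) r = circ u1 (circ u2 w)"
    using 1(1) 2(1,2) by (simp add: 3(4) r circ_assoc)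
  also have "\<dots> = circ (circ x y) z"
    using 1(1,2) assms(3) by (simp add: 2(4) 1(4) [symmetric] circ_assoc)
  finally show "circ (circ p q) r = circ (circ x y) z" .
qed

lemma R23_R12_R23:
  assumes "x \<in> carrier M" "y \<in> carrier M" "z \<in> carrier M"
    and "Id_x_R (R_map M B) (R_x_Id (R_map M B) (Id_x_R (R_map M B) (x, y, z))) = (p, q, r)"
  shows "p = Ad M (B x) (Ad M (B y) z)" "circ p q = Ad M (B x) y \<otimes> p"
    "circ (circ p q) r = circ (circ x y) z" "p \<in> carrier M" "q \<in> carrier M" "r \<in> carrier M"
proof -
  obtain a1 b1 where R1: "R_map M B (y, z) = (a1, b1)" by fastforce
  note 1 = R_map_eq_PairD [OF R1 assms(2,3)]
  obtain a2 c where R2: "R_map M B (x, a1) = (a2, c)" by fastforce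
  note 2 = R_map_eq_PairD [OF R2 assms(1) 1(1)]
  from assms(4) have R3: "R_map M B (c, b1) = (q, r)" and p: "p = a2"
    by (simp_all add: R_x_Id_def Id_x_R_def R1 R2 prod_eq_iff)
  note 3 = R_map_eq_PairD [OF R3 2(2) 1(2)]
  show "p \<in> carrier M" "q \<in> carrier M" "r \<in> carrier M"
    using 2(1) 3(1,2) by (simp_all add: p)
  show "p = Ad M (B x) (Ad M (B y) z)"
    by (simp only: p 2(3) 1(3))
  have "Ad M (B a1) b1 = inv a1 \<otimes> circ a1 b1"
    using 1(1,2) by (simp add: circ_def)
  also have "\<dots> = inv a1 \<otimes> (y \<otimes> a1)"
    by (simp add: 1(4) circ_def [of y] 1(3) [symmetric])
  finally have a1b1: "Ad M (B a1) b1 = inv a1 \<otimes> (y \<otimes> a1)" .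
  have "Ad M (B a2) q = Ad M (B (circ a2 c)) b1"
    using 1(2) 2(1,2) by (simp add: 3(3) Ad_B_circ)
  also have "\<dots> = Ad M (B x) (Ad M (B a1) b1)"
    using 1(1,2) assms(1) by (simp add: 2(4) Ad_B_circ)
  also have "\<dots> = inv a2 \<otimes> (Ad M (B x) y \<otimes> a2)"
    using 1(1) assms(1,2) by (simp add: a1b1 Ad_mult Ad_inv 2(3))
  finally have "Ad M (B a2) q = inv a2 \<otimes> (Ad M (B x) y \<otimes> a2)" .
  then show "circ p q = Ad M (B x) y \<otimes> p"
    using 2(1) assms(1,2) by (simp add: p circ_def)
  have "circ (circ p q) r = circ a2 (circ c b1)"
    using 2(1) 3(1,2) by (simp add: p 3(4) [symmetric] circ_assoc)
  also have "\<dots> = circ x (circ a1 b1)"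
    using 1(1,2) 2(1,2) assms(1) by (simp add: circ_assoc [symmetric] 2(4))
  also have "\<dots> = circ (circ x y) z"
    using assms by (simp add: 1(4) circ_assoc)
  finally show "circ (circ p q) r = circ (circ x y) z" .
qed

theorem braid_rel_R_map: "braid_rel (carrier M) (R_map M B)"
  unfolding braid_rel_def
proof (intro ballI)
  fix x y z assume xyz: "x \<in> carrier M" "y \<in> carrier M" "z \<in> carrier M"
  obtain p q r where lhs:
    "R_x_Id (R_map M B) (Id_x_R (R_map M B) (R_x_Id (R_map M B) (x, y, z))) = (p, q, r)"
    using prod_cases3 by blast
  obtain p' q' r' where rhs:
    "Id_x_R (R_map M B) (R_x_Id (R_map M B) (Id_x_R (R_map M B) (x, y, z))) = (p', q', r')"
    using prod_cases3 by blast
  note L = R12_R23_R12 [OF xyz lhs] and R = R23_R12_R23 [OF xyz rhs]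
  have p: "p = p'"
    using L(1) R(1) by simp
  have "circ p q = circ p q'"
    using L(2) R(2) unfolding p by simp
  then have q: "q = q'"
    using L(4,5) R(5) circ_left_cancel [of p q q'] by simp
  have "circ (circ p q) r = circ (circ p q) r'"
    using L(3) R(3) unfolding p q by simp
  then have "r = r'"
    using L(4-6) R(6) circ_left_cancel [of "circ p q" r r'] by simp
  with p q show "R_x_Id (R_map M B) (Id_x_R (R_map M B) (R_x_Id (R_map M B) (x, y, z))) =
      Id_x_R (R_map M B) (R_x_Id (R_map M B) (Id_x_R (R_map M B) (x, y, z)))"
    unfolding lhs rhs by simp
qed

end

section \<open>Semidirect products\<close>

locale aut_action = H: group H + G: group G
  for H :: "('h, 'c) monoid_scheme" and G :: "('g, 'd) monoid_scheme" +
  fixes Phi :: "'g \<Rightarrow> 'h \<Rightarrow> 'h"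
  assumes Phi_hom: "a \<in> carrier G \<Longrightarrow> Phi a \<in> hom H H"
    and Phi_mult [simp]: "a \<in> carrier G \<Longrightarrow> b \<in> carrier G \<Longrightarrow> p \<in> carrier H \<Longrightarrow>
      Phi (a \<otimes>\<^bsub>G\<^esub> b) p = Phi a (Phi b p)"
    and Phi_one [simp]: "p \<in> carrier H \<Longrightarrow> Phi \<one>\<^bsub>G\<^esub> p = p"
begin

lemma Phi_group_hom: "a \<in> carrier G \<Longrightarrow> group_hom H H (Phi a)"
  using Phi_hom by (simp add: group_hom_def group_hom_axioms_def H.group_axioms)

lemma Phi_closed [simp]: "a \<in> carrier G \<Longrightarrow> p \<in> carrier H \<Longrightarrow> Phi a p \<in> carrier H"
  by (rule hom_in_carrier [OF Phi_hom])

lemma Phi_hom_mult [simp]: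
  "a \<in> carrier G \<Longrightarrow> p \<in> carrier H \<Longrightarrow> q \<in> carrier H \<Longrightarrow>
    Phi a (p \<otimes>\<^bsub>H\<^esub> q) = Phi a p \<otimes>\<^bsub>H\<^esub> Phi a q"
  by (rule hom_mult [OF Phi_hom])

lemma Phi_hom_one [simp]: "a \<in> carrier G \<Longrightarrow> Phi a \<one>\<^bsub>H\<^esub> = \<one>\<^bsub>H\<^esub>"
  by (rule group_hom.hom_one [OF Phi_group_hom])

lemma Phi_hom_inv [simp]:
  "a \<in> carrier G \<Longrightarrow> p \<in> carrier H \<Longrightarrow> Phi a (inv\<^bsub>H\<^esub> p) = inv\<^bsub>H\<^esub> (Phi a p)"
  by (rule group_hom.hom_inv [OF Phi_group_hom])

lemma Phi_inv_Phi [simp]: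
  "a \<in> carrier G \<Longrightarrow> p \<in> carrier H \<Longrightarrow> Phi (inv\<^bsub>G\<^esub> a) (Phi a p) = p"
  by (simp flip: Phi_mult)

lemma Phi_Phi_inv [simp]:
  "a \<in> carrier G \<Longrightarrow> p \<in> carrier H \<Longrightarrow> Phi a (Phi (inv\<^bsub>G\<^esub> a) p) = p"
  by (simp flip: Phi_mult)

lemma semidirect_carrier [simp]: "carrier (semidirect G H Phi) = carrier G \<times> carrier H"
  by (simp add: semidirect_def)

lemma semidirect_mult [simp]:
  "(a, p) \<otimes>\<^bsub>semidirect G H Phi\<^esub> (b, q) = (a \<otimes>\<^bsub>G\<^esub> b, p \<otimes>\<^bsub>H\<^esub> Phi a q)"
  by (simp add: semidirect_def)

lemma semidirect_one [simp]: "\<one>\<^bsub>semidirect G H Phi\<^esub> = (\<one>\<^bsub>G\<^esub>, \<one>\<^bsub>H\<^esub>)"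
  by (simp add: semidirect_def)

lemma semidirect_group: "group (semidirect G H Phi)"
proof (rule groupI)
  fix x y z assume "x \<in> carrier (semidirect G H Phi)" "y \<in> carrier (semidirect G H Phi)"
    "z \<in> carrier (semidirect G H Phi)"
  then obtain a p b q c r where "x = (a, p)" "y = (b, q)" "z = (c, r)"
    and "a \<in> carrier G" "b \<in> carrier G" "c \<in> carrier G"
    and "p \<in> carrier H" "q \<in> carrier H" "r \<in> carrier H"
    by auto
  then show "x \<otimes>\<^bsub>semidirect G H Phi\<^esub> y \<otimes>\<^bsub>semidirect G H Phi\<^esub> z =
      x \<otimes>\<^bsub>semidirect G H Phi\<^esub> (y \<otimes>\<^bsub>semidirect G H Phi\<^esub> z)"
    by (simp add: G.m_assoc H.m_assoc)
next
  fix x assume "x \<in> carrier (semidirect G H Phi)"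
  then obtain a p where x: "x = (a, p)" "a \<in> carrier G" "p \<in> carrier H"
    by auto
  then show "\<one>\<^bsub>semidirect G H Phi\<^esub> \<otimes>\<^bsub>semidirect G H Phi\<^esub> x = x"
    by simp
  from x show "\<exists>y\<in>carrier (semidirect G H Phi). y \<otimes>\<^bsub>semidirect G H Phi\<^esub> x = \<one>\<^bsub>semidirect G H Phi\<^esub>"
    by (intro bexI [of _ "(inv\<^bsub>G\<^esub> a, Phi (inv\<^bsub>G\<^esub> a) (inv\<^bsub>H\<^esub> p))"]) simp_all
qed auto

lemma semidirect_inv [simp]:
  "a \<in> carrier G \<Longrightarrow> p \<in> carrier H \<Longrightarrow>
    inv\<^bsub>semidirect G H Phi\<^esub> (a, p) = (inv\<^bsub>G\<^esub> a, Phi (inv\<^bsub>G\<^esub> a) (inv\<^bsub>H\<^esub> p))"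
  by (rule group.inv_equality [OF semidirect_group]) simp_all

end

section \<open>The Rota-Baxter operator of a crossed module\<close>

lemma cm_category_simps [simp]:
  "cat_ob (cm_category H G t) = carrier G"
  "cat_mor (cm_category H G t) = carrier G \<times> carrier H"
  "cat_src (cm_category H G t) (a, p) = a"
  "cat_tgt (cm_category H G t) (a, p) = t p \<otimes>\<^bsub>G\<^esub> a"
  "cat_comp (cm_category H G t) (a, p) (b, q) = (b, p \<otimes>\<^bsub>H\<^esub> q)"
  "cat_id (cm_category H G t) a = (a, \<one>\<^bsub>H\<^esub>)"
  by (simp_all add: cm_category_def)

lemma subgroup_equalizer:
  assumes "group M" "group N" "f \<in> hom M N" "g \<in> hom M N"
  shows "subgroup {x \<in> carrier M. f x = g x} M"
proof -
  interpret f: group_hom M N f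
    using assms by (simp add: group_hom_def group_hom_axioms_def)
  interpret g: group_hom M N g
    using assms by (simp add: group_hom_def group_hom_axioms_def)
  show ?thesis
    by (rule f.G.subgroupI) auto
qed

lemma prod_cat_simps [simp]:
  "cat_ob (prod_cat C D) = cat_ob C \<times> cat_ob D"
  "cat_mor (prod_cat C D) = cat_mor C \<times> cat_mor D"
  "cat_src (prod_cat C D) = map_prod (cat_src C) (cat_src D)"
  "cat_tgt (prod_cat C D) = map_prod (cat_tgt C) (cat_tgt D)"
  "cat_comp (prod_cat C D) (f, g) (f', g') = (cat_comp C f f', cat_comp D g g')"
  "cat_id (prod_cat C D) = map_prod (cat_id C) (cat_id D)"
  by (simp_all add: prod_cat_def map_prod_def)

locale rota_baxter_crossed_module =
  fixes H :: "('h, 'c) monoid_scheme" and G :: "('g, 'd) monoid_scheme"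
    and t :: "'h \<Rightarrow> 'g" and Phi :: "'g \<Rightarrow> 'h \<Rightarrow> 'h"
    and B1 :: "'h \<Rightarrow> 'h" and B0 :: "'g \<Rightarrow> 'g"
  assumes crossed_module: "crossed_module H G t Phi"
    and rota_baxter_cm: "rota_baxter_cm H G t Phi B1 B0"
begin

sublocale aut_action H G Phi
  using crossed_module by (auto simp: crossed_module_def aut_action_def aut_action_axioms_def iso_def)

sublocale t: group_hom H G t
  using crossed_module by (simp add: crossed_module_def group_hom_def group_hom_axioms_def)

sublocale B1: rota_baxter_group H B1
  using rota_baxter_cm by unfold_locales (simp add: rota_baxter_cm_def)

sublocale B0: rota_baxter_group G B0
  using rota_baxter_cm by unfold_locales (simp add: rota_baxter_cm_def)

lemma Phi_t [simp]:
  "p \<in> carrier H \<Longrightarrow> q \<in> carrier H \<Longrightarrow> Phi (t p) q = p \<otimes>\<^bsub>H\<^esub> q \<otimes>\<^bsub>H\<^esub> inv\<^bsub>H\<^esub> p"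
  using crossed_module by (simp add: crossed_module_def)

lemma t_Phi [simp]:
  "a \<in> carrier G \<Longrightarrow> p \<in> carrier H \<Longrightarrow> t (Phi a p) = a \<otimes>\<^bsub>G\<^esub> t p \<otimes>\<^bsub>G\<^esub> inv\<^bsub>G\<^esub> a"
  using crossed_module by (simp add: crossed_module_def)

lemma t_B1: "p \<in> carrier H \<Longrightarrow> t (B1 p) = B0 (t p)"
  using rota_baxter_cm by (simp add: rota_baxter_cm_def)

lemma Phi_B0_B1:
  "a \<in> carrier G \<Longrightarrow> p \<in> carrier H \<Longrightarrow>
    Phi (B0 a) (B1 p) =
      B1 (Phi (a \<otimes>\<^bsub>G\<^esub> B0 a) (p \<otimes>\<^bsub>H\<^esub> B1 p) \<otimes>\<^bsub>H\<^esub> inv\<^bsub>H\<^esub> (Phi (B0 a) (B1 p)))"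
  using rota_baxter_cm by (simp add: rota_baxter_cm_def)

abbreviation "K \<equiv> semidirect G H Phi"
abbreviation "BK \<equiv> B_sd G H Phi B1 B0"
abbreviation "CC \<equiv> cm_category H G t"

sublocale K: group K
  by (rule semidirect_group)

text \<open>
  In the coordinates \<open>p = Phi (a \<otimes> B0 a) P\<close> the operator \<open>BK\<close> becomes
  \<open>(a, P) \<mapsto> (B0 a, Phi (B0 a) (B1 P))\<close>; every computation with \<open>BK\<close> below is done in them.
\<close>

lemma twisted_coordinate:
  assumes "a \<in> carrier G" "p \<in> carrier H"
  obtains P where "P \<in> carrier H" "p = Phi (a \<otimes>\<^bsub>G\<^esub> B0 a) P"
  using assms by (intro that [of "Phi (inv\<^bsub>G\<^esub> (a \<otimes>\<^bsub>G\<^esub> B0 a)) p"]) simp_all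

lemma BK_twisted:
  "a \<in> carrier G \<Longrightarrow> P \<in> carrier H \<Longrightarrow> BK (a, Phi (a \<otimes>\<^bsub>G\<^esub> B0 a) P) = (B0 a, Phi (B0 a) (B1 P))"
  by (simp add: B_sd_def G.inv_mult_group [symmetric] del: Phi_mult)

text \<open>Condition (iii) at the \<open>circ\<close>-inverse of \<open>b\<close>, which \<open>B0\<close> maps to \<open>inv (B0 b)\<close>.\<close>

lemma B1_at_circ_inverse:
  assumes b: "b \<in> carrier G" and P: "P \<in> carrier H"
  shows "B1 (Phi (inv\<^bsub>G\<^esub> (b \<otimes>\<^bsub>G\<^esub> B0 b)) (P \<otimes>\<^bsub>H\<^esub> B1 P) \<otimes>\<^bsub>H\<^esub> inv\<^bsub>H\<^esub> (Phi (inv\<^bsub>G\<^esub> (B0 b)) (B1 P)))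
    = Phi (inv\<^bsub>G\<^esub> (B0 b)) (B1 P)"
proof -
  define b' where "b' = inv\<^bsub>G\<^esub> (B0 b) \<otimes>\<^bsub>G\<^esub> inv\<^bsub>G\<^esub> b \<otimes>\<^bsub>G\<^esub> B0 b"
  have "B0 b' = inv\<^bsub>G\<^esub> (B0 b)"
    using b by (simp add: b'_def B0.B_circ_inverse)
  moreover have "b' \<otimes>\<^bsub>G\<^esub> inv\<^bsub>G\<^esub> (B0 b) = inv\<^bsub>G\<^esub> (b \<otimes>\<^bsub>G\<^esub> B0 b)"
    using b by (simp add: b'_def G.m_assoc G.inv_mult_group)
  ultimately show ?thesis
    using Phi_B0_B1 [of b' P] b P by (simp add: b'_def)
qed

lemma B1_twisted_shift:
  assumes b: "b \<in> carrier G" and P: "P \<in> carrier H" and Q: "Q \<in> carrier H"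
  shows "Phi (B0 b) (B1 (Phi (inv\<^bsub>G\<^esub> (b \<otimes>\<^bsub>G\<^esub> B0 b)) (P \<otimes>\<^bsub>H\<^esub> B1 P) \<otimes>\<^bsub>H\<^esub> Q
      \<otimes>\<^bsub>H\<^esub> inv\<^bsub>H\<^esub> (Phi (inv\<^bsub>G\<^esub> (B0 b)) (B1 P))))
    = B1 P \<otimes>\<^bsub>H\<^esub> Phi (B0 b) (B1 Q)"
proof -
  define x where "x = Phi (inv\<^bsub>G\<^esub> (b \<otimes>\<^bsub>G\<^esub> B0 b)) (P \<otimes>\<^bsub>H\<^esub> B1 P)
    \<otimes>\<^bsub>H\<^esub> inv\<^bsub>H\<^esub> (Phi (inv\<^bsub>G\<^esub> (B0 b)) (B1 P))"
  have x: "x \<in> carrier H"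
    using b P by (simp add: x_def)
  have Bx: "B1 x = Phi (inv\<^bsub>G\<^esub> (B0 b)) (B1 P)"
    using B1_at_circ_inverse [OF b P] by (simp add: x_def)
  have "x \<otimes>\<^bsub>H\<^esub> B1 x = Phi (inv\<^bsub>G\<^esub> (b \<otimes>\<^bsub>G\<^esub> B0 b)) (P \<otimes>\<^bsub>H\<^esub> B1 P)"
    unfolding Bx using b P by (simp add: x_def H.m_assoc del: Phi_mult Phi_hom_mult)
  then have "B1 (Phi (inv\<^bsub>G\<^esub> (b \<otimes>\<^bsub>G\<^esub> B0 b)) (P \<otimes>\<^bsub>H\<^esub> B1 P) \<otimes>\<^bsub>H\<^esub> Q
      \<otimes>\<^bsub>H\<^esub> inv\<^bsub>H\<^esub> (Phi (inv\<^bsub>G\<^esub> (B0 b)) (B1 P))) = B1 x \<otimes>\<^bsub>H\<^esub> B1 Q"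
    using B1.B_mult [OF x Q] by (simp add: Bx)
  then show ?thesis
    using b P Q by (simp add: Bx)
qed

lemma BK_rota_baxter: "rota_baxter K BK"
  unfolding rota_baxter_def
proof (intro conjI ballI)
  show "BK \<in> carrier K \<rightarrow> carrier K"
    by (auto simp: B_sd_def)
  fix U V assume "U \<in> carrier K" "V \<in> carrier K"
  then obtain a p b q where a: "a \<in> carrier G" and b: "b \<in> carrier G"
    and "p \<in> carrier H" "q \<in> carrier H" and "U = (a, p)" "V = (b, q)"
    by auto
  then obtain P Q where P: "P \<in> carrier H" and Q: "Q \<in> carrier H"
    and U: "U = (a, Phi (a \<otimes>\<^bsub>G\<^esub> B0 a) P)" and V: "V = (b, Phi (b \<otimes>\<^bsub>G\<^esub> B0 b) Q)"
    by (metis twisted_coordinate)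
  define c where "c = B0.circ a b"
  define Y where "Y = Phi (inv\<^bsub>G\<^esub> (b \<otimes>\<^bsub>G\<^esub> B0 b)) (P \<otimes>\<^bsub>H\<^esub> B1 P) \<otimes>\<^bsub>H\<^esub> Q
      \<otimes>\<^bsub>H\<^esub> inv\<^bsub>H\<^esub> (Phi (inv\<^bsub>G\<^esub> (B0 b)) (B1 P))"
  have c: "c \<in> carrier G" and Y: "Y \<in> carrier H"
    using a b P Q by (simp_all add: c_def Y_def)
  have Bc: "B0 c = B0 a \<otimes>\<^bsub>G\<^esub> B0 b"
    using a b by (simp add: c_def B0.B_circ)
  have cBc: "a \<otimes>\<^bsub>G\<^esub> B0 a \<otimes>\<^bsub>G\<^esub> (b \<otimes>\<^bsub>G\<^esub> B0 b) = c \<otimes>\<^bsub>G\<^esub> B0 c"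
    unfolding Bc using a b by (simp add: c_def B0.circ_def Ad_def G.m_assoc)
  have BU: "BK U = (B0 a, Phi (B0 a) (B1 P))" and BV: "BK V = (B0 b, Phi (B0 b) (B1 Q))"
    using a b P Q by (simp_all only: U V BK_twisted)
  have "U \<otimes>\<^bsub>K\<^esub> BK U \<otimes>\<^bsub>K\<^esub> V \<otimes>\<^bsub>K\<^esub> inv\<^bsub>K\<^esub> (BK U) =
      (c, Phi (a \<otimes>\<^bsub>G\<^esub> B0 a \<otimes>\<^bsub>G\<^esub> (b \<otimes>\<^bsub>G\<^esub> B0 b)) Y)"
    unfolding BU using a b P Q
    by (simp add: U V c_def B0.circ_def Ad_def Y_def G.m_assoc H.m_assoc G.inv_mult_group)
  then have "BK (U \<otimes>\<^bsub>K\<^esub> BK U \<otimes>\<^bsub>K\<^esub> V \<otimes>\<^bsub>K\<^esub> inv\<^bsub>K\<^esub> (BK U)) = (B0 c, Phi (B0 c) (B1 Y))"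
    by (simp only: cBc BK_twisted [OF c Y])
  also have "\<dots> = (B0 a \<otimes>\<^bsub>G\<^esub> B0 b, Phi (B0 a) (Phi (B0 b) (B1 Y)))"
    using a b Y by (simp add: Bc)
  also have "Phi (B0 b) (B1 Y) = B1 P \<otimes>\<^bsub>H\<^esub> Phi (B0 b) (B1 Q)"
    unfolding Y_def using b P Q by (rule B1_twisted_shift)
  also have "(B0 a \<otimes>\<^bsub>G\<^esub> B0 b, Phi (B0 a) (B1 P \<otimes>\<^bsub>H\<^esub> Phi (B0 b) (B1 Q))) = BK U \<otimes>\<^bsub>K\<^esub> BK V"
    using a b P Q by (simp add: BU BV)
  finally show "BK U \<otimes>\<^bsub>K\<^esub> BK V = BK (U \<otimes>\<^bsub>K\<^esub> BK U \<otimes>\<^bsub>K\<^esub> V \<otimes>\<^bsub>K\<^esub> inv\<^bsub>K\<^esub> (BK U))" ..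
qed

sublocale BK: rota_baxter_group K BK
  by unfold_locales (rule BK_rota_baxter)

lemma tgt_twisted:
  "a \<in> carrier G \<Longrightarrow> P \<in> carrier H \<Longrightarrow> cat_tgt CC (a, Phi (a \<otimes>\<^bsub>G\<^esub> B0 a) P) = B0.circ a (t P)"
  by (simp add: B0.circ_def Ad_def G.m_assoc)

lemma src_hom: "cat_src CC \<in> hom K G"
  by (rule homI) auto

lemma tgt_hom: "cat_tgt CC \<in> hom K G"
  by (rule homI) (auto simp: G.m_assoc)

lemma src_BK: "u \<in> carrier K \<Longrightarrow> cat_src CC (BK u) = B0 (cat_src CC u)"
  by (auto simp: B_sd_def)

lemma tgt_BK:
  assumes "u \<in> carrier K"
  shows "cat_tgt CC (BK u) = B0 (cat_tgt CC u)"
proof -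
  obtain a P where a: "a \<in> carrier G" and P: "P \<in> carrier H"
    and u: "u = (a, Phi (a \<otimes>\<^bsub>G\<^esub> B0 a) P)"
    using assms by (metis mem_Sigma_iff semidirect_carrier surj_pair twisted_coordinate)
  have "cat_tgt CC (BK u) = B0 a \<otimes>\<^bsub>G\<^esub> B0 (t P)"
    unfolding u BK_twisted [OF a P] using a P by (simp add: t_B1 G.m_assoc)
  also have "\<dots> = B0 (cat_tgt CC u)"
    unfolding u tgt_twisted [OF a P] using a P by (simp add: B0.B_circ)
  finally show ?thesis .
qed

lemma rb_hom_src: "rb_hom K BK G B0 (cat_src CC)"
  unfolding rb_hom_def using src_hom src_BK by blast

lemma rb_hom_tgt: "rb_hom K BK G B0 (cat_tgt CC)"
  unfolding rb_hom_def using tgt_hom tgt_BK by blast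

lemma rb_hom_id: "rb_hom G B0 K BK (cat_id CC)"
  by (auto intro!: homI simp: rb_hom_def B_sd_def)

lemma BK_comp:
  assumes f: "f \<in> carrier K" and g: "g \<in> carrier K" and fg: "cat_tgt CC g = cat_src CC f"
  shows "BK (cat_comp CC f g) = cat_comp CC (BK f) (BK g)"
proof -
  obtain a p b q where a_closed: "a \<in> carrier G" and b: "b \<in> carrier G"
    and "p \<in> carrier H" "q \<in> carrier H" and f: "f = (a, p)" and "g = (b, q)"
    using f g by auto
  then obtain P Q where P: "P \<in> carrier H" and Q: "Q \<in> carrier H"
    and p: "p = Phi (b \<otimes>\<^bsub>G\<^esub> B0 b) P" and g: "g = (b, Phi (b \<otimes>\<^bsub>G\<^esub> B0 b) Q)"
    by (metis twisted_coordinate)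
  have a: "a = B0.circ b (t Q)"
    using fg b Q by (simp add: f g tgt_twisted [symmetric])
  define R where "R = Q \<otimes>\<^bsub>H\<^esub> B1 Q"
  have R: "R \<in> carrier H"
    using Q by (simp add: R_def)
  have Ba: "B0 a = B0 b \<otimes>\<^bsub>G\<^esub> t (B1 Q)"
    using b Q by (simp add: a B0.B_circ t_B1)
  have "a \<otimes>\<^bsub>G\<^esub> B0 a = b \<otimes>\<^bsub>G\<^esub> B0 b \<otimes>\<^bsub>G\<^esub> t R"
    unfolding Ba using b Q by (simp add: a R_def B0.circ_def Ad_def G.m_assoc)
  then have p': "p = Phi (a \<otimes>\<^bsub>G\<^esub> B0 a) (inv\<^bsub>H\<^esub> R \<otimes>\<^bsub>H\<^esub> P \<otimes>\<^bsub>H\<^esub> R)"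
    using b P R by (simp add: p H.m_assoc)
  have "B1 Q \<otimes>\<^bsub>H\<^esub> B1 (inv\<^bsub>H\<^esub> R \<otimes>\<^bsub>H\<^esub> P \<otimes>\<^bsub>H\<^esub> R) = B1 (P \<otimes>\<^bsub>H\<^esub> Q)"
    using B1.B_mult [of Q "inv\<^bsub>H\<^esub> R \<otimes>\<^bsub>H\<^esub> P \<otimes>\<^bsub>H\<^esub> R"] P Q
    by (simp add: R_def H.m_assoc H.inv_mult_group)
  moreover have "BK f = (B0 a, Phi (B0 a) (B1 (inv\<^bsub>H\<^esub> R \<otimes>\<^bsub>H\<^esub> P \<otimes>\<^bsub>H\<^esub> R)))"
    unfolding f p' using a_closed P R by (intro BK_twisted) simp_all
  moreover have "BK g = (B0 b, Phi (B0 b) (B1 Q))"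
    unfolding g using b Q by (rule BK_twisted)
  ultimately have "snd (BK f) \<otimes>\<^bsub>H\<^esub> snd (BK g) = Phi (B0 b) (B1 (P \<otimes>\<^bsub>H\<^esub> Q))"
    using b P Q R by (simp add: Ba H.m_assoc flip: Phi_hom_mult)
  moreover have "cat_comp CC f g = (b, Phi (b \<otimes>\<^bsub>G\<^esub> B0 b) (P \<otimes>\<^bsub>H\<^esub> Q))"
    using b P Q by (simp add: f g p del: Phi_mult)
  then have "BK (cat_comp CC f g) = (B0 b, Phi (B0 b) (B1 (P \<otimes>\<^bsub>H\<^esub> Q)))"
    using b P Q by (simp only: BK_twisted H.m_closed)
  ultimately show ?thesis
    by (simp add: f g B_sd_def)
qed

section \<open>Functoriality\<close>

text \<open>
  Composition is a homomorphism on the subgroup of composable pairs of \<open>K \<times>\<times> K\<close>, so compatibility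
  of \<open>R\<close> with composition is one more instance of naturality.
\<close>

definition composable :: "(('g \<times> 'h) \<times> ('g \<times> 'h)) set" where
  "composable = {(f, g) \<in> carrier K \<times> carrier K. cat_tgt CC g = cat_src CC f}"

abbreviation "composable_group \<equiv> (K \<times>\<times> K)\<lparr>carrier := composable\<rparr>"

lemma subgroup_composable: "subgroup composable (K \<times>\<times> K)"
proof -
  have "composable = {u \<in> carrier (K \<times>\<times> K). cat_tgt CC (snd u) = cat_src CC (fst u)}"
    by (auto simp: composable_def)
  also have "subgroup \<dots> (K \<times>\<times> K)"
  proof (rule subgroup_equalizer)
    show "group (K \<times>\<times> K)"
      by (intro DirProd_group K.is_group)
    show "(\<lambda>u. cat_tgt CC (snd u)) \<in> hom (K \<times>\<times> K) G" "(\<lambda>u. cat_src CC (fst u)) \<in> hom (K \<times>\<times> K) G"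
      by (auto intro!: homI simp: mult_DirProd' G.m_assoc)
  qed (rule G.is_group)
  finally show ?thesis .
qed

lemma group_composable_group: "group composable_group"
  by (intro subgroup.subgroup_is_group subgroup_composable DirProd_group K.is_group)

lemma composableE:
  assumes "u \<in> composable"
  obtains f g where "u = (f, g)" "f \<in> carrier K" "g \<in> carrier K" "cat_tgt CC g = cat_src CC f"
  using assms unfolding composable_def by blast

lemma map_prod_BK_closed: "map_prod BK BK \<in> carrier composable_group \<rightarrow> carrier composable_group"
proof
  fix u assume "u \<in> carrier composable_group"
  then obtain f g where u: "u = (f, g)" and f: "f \<in> carrier K" and g: "g \<in> carrier K"
    and fg: "cat_tgt CC g = cat_src CC f"
    by (auto elim: composableE)
  have "cat_tgt CC (BK g) = cat_src CC (BK f)"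
    using f g fg by (simp only: tgt_BK src_BK)
  then show "map_prod BK BK u \<in> carrier composable_group"
    using f g BK.B_closed by (simp add: u composable_def del: semidirect_carrier)
qed

lemma rb_hom_fst: "rb_hom composable_group (map_prod BK BK) K BK fst"
  and rb_hom_snd: "rb_hom composable_group (map_prod BK BK) K BK snd"
  by (auto intro!: homI simp: rb_hom_def composable_def mult_DirProd')

lemma rb_hom_comp: "rb_hom composable_group (map_prod BK BK) K BK (case_prod (cat_comp CC))"
  unfolding rb_hom_def
proof (intro conjI ballI)
  show "case_prod (cat_comp CC) \<in> hom composable_group K"
  proof (rule homI)
    fix u v assume "u \<in> carrier composable_group" "v \<in> carrier composable_group"
    then obtain a p b q a' p' b' q' where "u = ((a, p), (b, q))" "v = ((a', p'), (b', q'))"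
      and "a \<in> carrier G" "b \<in> carrier G" "a' \<in> carrier G" "b' \<in> carrier G"
        "p \<in> carrier H" "q \<in> carrier H" "p' \<in> carrier H" "q' \<in> carrier H"
      and "a = t q \<otimes>\<^bsub>G\<^esub> b"
      by (auto simp: composable_def)
    then show "case_prod (cat_comp CC) (u \<otimes>\<^bsub>composable_group\<^esub> v) =
        case_prod (cat_comp CC) u \<otimes>\<^bsub>K\<^esub> case_prod (cat_comp CC) v"
      by (simp add: H.m_assoc)
  qed (auto simp: composable_def)
  fix u assume "u \<in> carrier composable_group"
  then obtain f g where "u = (f, g)" "f \<in> carrier K" "g \<in> carrier K" "cat_tgt CC g = cat_src CC f"
    by (auto elim: composableE)
  then show "case_prod (cat_comp CC) (map_prod BK BK u) = BK (case_prod (cat_comp CC) u)"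
    by (simp add: BK_comp del: cm_category_simps)
qed

lemma is_functor_square_natural:
  assumes closed0: "\<And>a b. a \<in> carrier G \<Longrightarrow> b \<in> carrier G \<Longrightarrow> F0 (a, b) \<in> carrier G \<times> carrier G"
    and closed1: "\<And>x y. x \<in> carrier K \<Longrightarrow> y \<in> carrier K \<Longrightarrow> F1 (x, y) \<in> carrier K \<times> carrier K"
    and src: "\<And>x y. x \<in> carrier K \<Longrightarrow> y \<in> carrier K \<Longrightarrow>
      F0 (cat_src CC x, cat_src CC y) = map_prod (cat_src CC) (cat_src CC) (F1 (x, y))"
    and tgt: "\<And>x y. x \<in> carrier K \<Longrightarrow> y \<in> carrier K \<Longrightarrow>
      F0 (cat_tgt CC x, cat_tgt CC y) = map_prod (cat_tgt CC) (cat_tgt CC) (F1 (x, y))"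
    and ident: "\<And>a b. a \<in> carrier G \<Longrightarrow> b \<in> carrier G \<Longrightarrow>
      F1 (cat_id CC a, cat_id CC b) = map_prod (cat_id CC) (cat_id CC) (F0 (a, b))"
    and comp: "\<And>u v. u \<in> composable \<Longrightarrow> v \<in> composable \<Longrightarrow>
      F1 (case_prod (cat_comp CC) u, case_prod (cat_comp CC) v) =
        map_prod (case_prod (cat_comp CC)) (case_prod (cat_comp CC)) (FD (u, v))"
    and proj1: "\<And>u v. u \<in> composable \<Longrightarrow> v \<in> composable \<Longrightarrow>
      F1 (fst u, fst v) = map_prod fst fst (FD (u, v))"
    and proj2: "\<And>u v. u \<in> composable \<Longrightarrow> v \<in> composable \<Longrightarrow>
      F1 (snd u, snd v) = map_prod snd snd (FD (u, v))"
  shows "is_functor (prod_cat CC CC) (prod_cat CC CC) F1 F0"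
  unfolding is_functor_def
proof (intro conjI ballI impI)
  show "F0 \<in> cat_ob (prod_cat CC CC) \<rightarrow> cat_ob (prod_cat CC CC)"
    using closed0 by auto
  show "F1 \<in> cat_mor (prod_cat CC CC) \<rightarrow> cat_mor (prod_cat CC CC)"
    using closed1 by auto
  fix f assume "f \<in> cat_mor (prod_cat CC CC)"
  then obtain x y where f: "f = (x, y)" and xy: "x \<in> carrier K" "y \<in> carrier K"
    by auto
  show "cat_src (prod_cat CC CC) (F1 f) = F0 (cat_src (prod_cat CC CC) f)"
    using src [OF xy] by (simp add: f del: cm_category_simps)
  show "cat_tgt (prod_cat CC CC) (F1 f) = F0 (cat_tgt (prod_cat CC CC) f)"
    using tgt [OF xy] by (simp add: f del: cm_category_simps)
  fix g assume "g \<in> cat_mor (prod_cat CC CC)"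
    and fg: "cat_tgt (prod_cat CC CC) g = cat_src (prod_cat CC CC) f"
  then obtain x' y' where g: "g = (x', y')" and "x' \<in> carrier K" "y' \<in> carrier K"
    by auto
  with xy fg have u: "(x, x') \<in> composable" and v: "(y, y') \<in> composable"
    by (simp_all add: f composable_def del: cm_category_simps)
  obtain U V where FD: "FD ((x, x'), (y, y')) = (U, V)"
    by (metis surj_pair)
  have "F1 (x, y) = (fst U, fst V)" "F1 (x', y') = (snd U, snd V)"
    using proj1 [OF u v] proj2 [OF u v] by (simp_all add: FD)
  then show "F1 (cat_comp (prod_cat CC CC) f g) = cat_comp (prod_cat CC CC) (F1 f) (F1 g)"
    using comp [OF u v] by (simp add: f g FD split_def del: cm_category_simps)
next
  fix z assume "z \<in> cat_ob (prod_cat CC CC)"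
  then obtain a b where "z = (a, b)" "a \<in> carrier G" "b \<in> carrier G"
    by auto
  then show "F1 (cat_id (prod_cat CC CC) z) = cat_id (prod_cat CC CC) (F0 z)"
    using ident by (simp del: cm_category_simps)
qed

lemma is_functor_R_map: "is_functor (prod_cat CC CC) (prod_cat CC CC) (R_map K BK) (R_map G B0)"
proof -
  note natural =
    R_map_natural [OF K.is_group G.is_group BK.B_Pi rb_hom_src]
    R_map_natural [OF K.is_group G.is_group BK.B_Pi rb_hom_tgt]
    R_map_natural [OF G.is_group K.is_group B0.B_Pi rb_hom_id]
    R_map_natural [OF group_composable_group K.is_group map_prod_BK_closed rb_hom_comp]
    R_map_natural [OF group_composable_group K.is_group map_prod_BK_closed rb_hom_fst]
    R_map_natural [OF group_composable_group K.is_group map_prod_BK_closed rb_hom_snd]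
  show ?thesis
    by (rule is_functor_square_natural [where FD = "R_map composable_group (map_prod BK BK)"];
        rule G.R_map_closed [OF B0.B_Pi] K.R_map_closed [OF BK.B_Pi] natural; simp)
qed

lemma is_functor_R_map_inv:
  "is_functor (prod_cat CC CC) (prod_cat CC CC) (R_map_inv K BK) (R_map_inv G B0)"
proof -
  note natural =
    R_map_inv_natural [OF K.is_group G.is_group BK.B_Pi rb_hom_src]
    R_map_inv_natural [OF K.is_group G.is_group BK.B_Pi rb_hom_tgt]
    R_map_inv_natural [OF G.is_group K.is_group B0.B_Pi rb_hom_id]
    R_map_inv_natural [OF group_composable_group K.is_group map_prod_BK_closed rb_hom_comp]
    R_map_inv_natural [OF group_composable_group K.is_group map_prod_BK_closed rb_hom_fst]
    R_map_inv_natural [OF group_composable_group K.is_group map_prod_BK_closed rb_hom_snd]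
  show ?thesis
    by (rule is_functor_square_natural [where FD = "R_map_inv composable_group (map_prod BK BK)"];
        rule G.R_map_inv_closed [OF B0.B_Pi] K.R_map_inv_closed [OF BK.B_Pi] natural; simp)
qed

end

theorem theorem3p3:
  fixes H :: "('h, 'c) monoid_scheme" and G :: "('g, 'd) monoid_scheme"
    and t :: "'h \<Rightarrow> 'g" and Phi :: "'g \<Rightarrow> 'h \<Rightarrow> 'h"
    and B1 :: "'h \<Rightarrow> 'h" and B0 :: "'g \<Rightarrow> 'g"
  assumes "crossed_module H G t Phi"
    and "rota_baxter_cm H G t Phi B1 B0"
  shows "categorical_YBE_solution (cm_category H G t) (R1 G H Phi B1 B0) (R0 G B0)"
proof -
  interpret rota_baxter_crossed_module H G t Phi B1 B0
    using assms by unfold_locales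
  have "invertible_functor (prod_cat CC CC) (prod_cat CC CC) (R_map K BK) (R_map G B0)"
    unfolding invertible_functor_def
    using is_functor_R_map is_functor_R_map_inv
      G.R_map_inv_R_map [OF B0.B_Pi] G.R_map_R_map_inv [OF B0.B_Pi]
      K.R_map_inv_R_map [OF BK.B_Pi] K.R_map_R_map_inv [OF BK.B_Pi]
    by (intro conjI exI [of _ "R_map_inv K BK"] exI [of _ "R_map_inv G B0"]) auto
  moreover have "braid_rel (cat_ob CC) (R_map G B0)" "braid_rel (cat_mor CC) (R_map K BK)"
    using B0.braid_rel_R_map BK.braid_rel_R_map by simp_all
  ultimately show ?thesis
    by (simp add: categorical_YBE_solution_def R0_def R1_def)
qed

end
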